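(* Let $(X,\ast,u,d)$ be a finite block GL-rack, let $\Delta=\alpha_1\cdots\alpha_n$ be the disjoint cycle decomposition of its diagonal map (fixed points counted as $1$-cycles), and let $A_i=\operatorname{supp}(\alpha_i)$, so $X=\bigsqcup_{i=1}^n A_i$. Let $\widetilde X=\{a_1,\dots,a_n\}$ and $\pi\colon X\to\widetilde X$ the map with $\pi(A_i)=\{a_i\}$. Define on $\widetilde X$ $$a_i\,\tilde\ast\,a_j=\pi(A_i\ast A_j),\qquad \tilde u(a_i)=\pi(u(A_i)),\qquad \tilde d(a_i)=\pi(d(A_i)),$$ where $A_i\ast A_j=\{x\ast y:x\in A_i,y\in A_j\}$. Then these operations are well defined (each of $A_i\ast A_j$, $u(A_i)$, $d(A_i)$ is a single block $A_k$), and $(\widetilde X,\tilde\ast,\tilde u,\tilde d)$ is a GL-quandle.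
   Context: A rack is a set $X$ with a binary operation $\ast$ such that for every $y\in X$ the map $x\mapsto x\ast y$ is a bijection of $X$ and $(x\ast y)\ast z=(x\ast z)\ast(y\ast z)$ for all $x,y,z$. A GL-rack is a quadruple $(X,\ast,u,d)$ where $(X,\ast)$ is a rack and $u,d\colon X\to X$ are maps such that for all $x,y\in X$: $u(d(x\ast x))=d(u(x\ast x))=x$; $u(x\ast y)=u(x)\ast y$ and $d(x\ast y)=d(x)\ast y$; $x\ast u(y)=x\ast d(y)=x\ast y$. A GL-quandle is a GL-rack with $x\ast x=x$ for all $x$. The diagonal map is $\Delta(x)=x\ast x$; for a finite GL-rack it is a bijection and $\Delta=(u\circ d)^{-1}$. A finite GL-rack is a block GL-rack if all cycles in the disjoint cycle decomposition of $\Delta$ (including cycles of length $1$) have the same length. *)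

theory Defs
  imports Main
begin

definition rack :: "'a set \<Rightarrow> ('a \<Rightarrow> 'a \<Rightarrow> 'a) \<Rightarrow> bool" where
  "rack X op \<longleftrightarrow>
     (\<forall>x\<in>X. \<forall>y\<in>X. op x y \<in> X) \<and>
     (\<forall>y\<in>X. bij_betw (\<lambda>x. op x y) X X) \<and>
     (\<forall>x\<in>X. \<forall>y\<in>X. \<forall>z\<in>X. op (op x y) z = op (op x z) (op y z))"

definition GL_rack :: "'a set \<Rightarrow> ('a \<Rightarrow> 'a \<Rightarrow> 'a) \<Rightarrow> ('a \<Rightarrow> 'a) \<Rightarrow> ('a \<Rightarrow> 'a) \<Rightarrow> bool" where
  "GL_rack X op u d \<longleftrightarrow>
     rack X op \<and>
     (\<forall>x\<in>X. u x \<in> X) \<and> (\<forall>x\<in>X. d x \<in> X) \<and>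
     (\<forall>x\<in>X. u (d (op x x)) = x \<and> d (u (op x x)) = x) \<and>
     (\<forall>x\<in>X. \<forall>y\<in>X. u (op x y) = op (u x) y \<and> d (op x y) = op (d x) y) \<and>
     (\<forall>x\<in>X. \<forall>y\<in>X. op x (u y) = op x y \<and> op x (d y) = op x y)"

definition GL_quandle :: "'a set \<Rightarrow> ('a \<Rightarrow> 'a \<Rightarrow> 'a) \<Rightarrow> ('a \<Rightarrow> 'a) \<Rightarrow> ('a \<Rightarrow> 'a) \<Rightarrow> bool" where
  "GL_quandle X op u d \<longleftrightarrow> GL_rack X op u d \<and> (\<forall>x\<in>X. op x x = x)"

definition diag :: "('a \<Rightarrow> 'a \<Rightarrow> 'a) \<Rightarrow> 'a \<Rightarrow> 'a" where
  "diag op x = op x x"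

definition diag_cycle :: "('a \<Rightarrow> 'a \<Rightarrow> 'a) \<Rightarrow> 'a \<Rightarrow> 'a set" where
  "diag_cycle op x = {(diag op ^^ k) x | k. True}"

definition blocks :: "'a set \<Rightarrow> ('a \<Rightarrow> 'a \<Rightarrow> 'a) \<Rightarrow> 'a set set" where
  "blocks X op = diag_cycle op ` X"

definition block_GL_rack :: "'a set \<Rightarrow> ('a \<Rightarrow> 'a \<Rightarrow> 'a) \<Rightarrow> ('a \<Rightarrow> 'a) \<Rightarrow> ('a \<Rightarrow> 'a) \<Rightarrow> bool" where
  "block_GL_rack X op u d \<longleftrightarrow> GL_rack X op u d \<and> finite X \<and>
     (\<forall>x\<in>X. \<forall>y\<in>X. card (diag_cycle op x) = card (diag_cycle op y))"

text \<open>The quotient: the element a_i is represented by the block A_i itself, pi maps x to its block.\<close>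

definition blk_proj :: "('a \<Rightarrow> 'a \<Rightarrow> 'a) \<Rightarrow> 'a \<Rightarrow> 'a set" where
  "blk_proj op x = diag_cycle op x"

definition set_op :: "('a \<Rightarrow> 'a \<Rightarrow> 'a) \<Rightarrow> 'a set \<Rightarrow> 'a set \<Rightarrow> 'a set" where
  "set_op op A B = {op x y | x y. x \<in> A \<and> y \<in> B}"

definition q_op :: "('a \<Rightarrow> 'a \<Rightarrow> 'a) \<Rightarrow> 'a set \<Rightarrow> 'a set \<Rightarrow> 'a set" where
  "q_op op A B = the_elem (blk_proj op ` set_op op A B)"

definition q_map :: "('a \<Rightarrow> 'a \<Rightarrow> 'a) \<Rightarrow> ('a \<Rightarrow> 'a) \<Rightarrow> 'a set \<Rightarrow> 'a set" where
  "q_map op f A = the_elem (blk_proj op ` (f ` A))"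

end

theory Submission
  imports Defs "HOL-Combinatorics.Permutations"
begin

text \<open>
  From self-distributivity and surjectivity of right translations one gets \<open>x \<star> (y \<star> y) = x \<star> y\<close> and
  \<open>(x \<star> y) \<star> (x \<star> y) = (x \<star> x) \<star> y\<close>, hence
  \<open>\<Delta>\<^sup>k x \<star> \<Delta>\<^sup>l y = \<Delta>\<^sup>k (x \<star> y)\<close>: the product of two \<open>\<Delta>\<close>-orbits is
  exactly the \<open>\<Delta>\<close>-orbit of a product. Likewise \<open>u\<close> and \<open>d\<close> commute with \<open>\<Delta>\<close>
  and so map orbits onto orbits. As \<open>u \<circ> d \<circ> \<Delta> = id\<close>, \<open>\<Delta>\<close> is injective on the
  finite set \<open>X\<close>, so the orbits partition \<open>X\<close> and every GL-rack identity, being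
  an identity between representatives, descends to the set of orbits.
  Idempotence holds because \<open>x \<star> x = \<Delta> x\<close> lies in the orbit of \<open>x\<close>.
\<close>

lemma funpow_orbit_eq:
  assumes "n > 0" "(f ^^ n) x = x"
  shows "{(f ^^ k) ((f ^^ m) x) | k. True} = {(f ^^ k) x | k. True}"
proof -
  have period: "(f ^^ (n * m)) x = x"
    using assms(2) by (induction m) (simp_all add: funpow_add)
  obtain p where "n = Suc p"
    using assms(1) gr0_implies_Suc by blast
  then have "(f ^^ (p * m)) ((f ^^ m) x) = x"
    using period by (metis add.commute comp_apply funpow_add mult_Suc)
  then have from_fm: "(f ^^ k) x = (f ^^ (k + p * m)) ((f ^^ m) x)" for k
    by (simp add: funpow_add)
  have to_fm: "(f ^^ k) ((f ^^ m) x) = (f ^^ (k + m)) x" for k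
    by (simp add: funpow_add)
  show ?thesis
    using from_fm to_fm by blast
qed

lemma funpow_inj_on_finite:
  assumes "inj_on f S" "f ` S \<subseteq> S" "finite S" "x \<in> S"
  obtains n where "n > 0" "(f ^^ n) x = x"
proof -
  define g where "g y = (if y \<in> S then f y else y)" for y
  have "bij_betw g S S"
    using assms(1-3) endo_inj_surj[of S f] unfolding bij_betw_def g_def
    by (auto simp: inj_on_def image_def)
  then have "permutation g"
    by (metis (mono_tags) bij_imp_permutes g_def permutes_imp_permutation assms(3))
  then obtain n where n: "n > 0" "(g ^^ n) x = x"
    by (rule permutation_self)
  have "(g ^^ k) x = (f ^^ k) x \<and> (f ^^ k) x \<in> S" for k
    using assms(2,4) by (induction k) (auto simp: g_def)
  then show thesis
    using n that by metis
qed

locale gl_rack =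
  fixes X :: "'a set" and op :: "'a \<Rightarrow> 'a \<Rightarrow> 'a" (infixl "\<star>" 70) and u d :: "'a \<Rightarrow> 'a"
  assumes GL_rack: "GL_rack X op u d"
begin

lemma op_closed: "x \<in> X \<Longrightarrow> y \<in> X \<Longrightarrow> x \<star> y \<in> X"
  using GL_rack unfolding GL_rack_def rack_def by blast

lemma self_distrib: "x \<in> X \<Longrightarrow> y \<in> X \<Longrightarrow> z \<in> X \<Longrightarrow> (x \<star> y) \<star> z = (x \<star> z) \<star> (y \<star> z)"
  using GL_rack unfolding GL_rack_def rack_def by blast

lemma right_translation_surj: "x \<in> X \<Longrightarrow> y \<in> X \<Longrightarrow> \<exists>w\<in>X. w \<star> y = x"
  using GL_rack unfolding GL_rack_def rack_def bij_betw_def by (metis imageE)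

lemma u_closed: "x \<in> X \<Longrightarrow> u x \<in> X"
  and d_closed: "x \<in> X \<Longrightarrow> d x \<in> X"
  and u_d_diag: "x \<in> X \<Longrightarrow> u (d (x \<star> x)) = x"
  and d_u_diag: "x \<in> X \<Longrightarrow> d (u (x \<star> x)) = x"
  and u_op: "x \<in> X \<Longrightarrow> y \<in> X \<Longrightarrow> u (x \<star> y) = u x \<star> y"
  and d_op: "x \<in> X \<Longrightarrow> y \<in> X \<Longrightarrow> d (x \<star> y) = d x \<star> y"
  and op_u: "x \<in> X \<Longrightarrow> y \<in> X \<Longrightarrow> x \<star> u y = x \<star> y"
  and op_d: "x \<in> X \<Longrightarrow> y \<in> X \<Longrightarrow> x \<star> d y = x \<star> y"
  using GL_rack unfolding GL_rack_def by blast+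

lemma funpow_diag_closed: "x \<in> X \<Longrightarrow> (diag op ^^ k) x \<in> X"
  by (induction k) (simp_all add: diag_def op_closed)

lemma op_diag_right:
  assumes "x \<in> X" "y \<in> X"
  shows "x \<star> diag op y = x \<star> y"
proof -
  obtain w where "w \<in> X" "x = w \<star> y"
    using right_translation_surj assms by blast
  then show ?thesis
    using self_distrib[of w y y] assms by (simp add: diag_def)
qed

lemma op_funpow_diag_right: "x \<in> X \<Longrightarrow> y \<in> X \<Longrightarrow> x \<star> (diag op ^^ k) y = x \<star> y"
  by (induction k) (simp_all add: op_diag_right funpow_diag_closed)

lemma diag_op: "x \<in> X \<Longrightarrow> y \<in> X \<Longrightarrow> diag op (x \<star> y) = diag op x \<star> y"
  by (simp add: diag_def self_distrib)

lemma funpow_diag_op: "x \<in> X \<Longrightarrow> y \<in> X \<Longrightarrow> (diag op ^^ k) (x \<star> y) = (diag op ^^ k) x \<star> y"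
  by (induction k) (simp_all add: diag_op funpow_diag_closed)

lemma diag_u: "x \<in> X \<Longrightarrow> diag op (u x) = u (diag op x)"
  by (simp add: diag_def u_op op_u u_closed)

lemma diag_d: "x \<in> X \<Longrightarrow> diag op (d x) = d (diag op x)"
  by (simp add: diag_def d_op op_d d_closed)

lemma inj_on_diag: "inj_on (diag op) X"
  by (rule inj_onI) (metis diag_def u_d_diag)

lemma set_op_diag_cycle:
  assumes "x \<in> X" "y \<in> X"
  shows "set_op op (diag_cycle op x) (diag_cycle op y) = diag_cycle op (x \<star> y)"
proof
  show "set_op op (diag_cycle op x) (diag_cycle op y) \<subseteq> diag_cycle op (x \<star> y)"
  proof
    fix z assume "z \<in> set_op op (diag_cycle op x) (diag_cycle op y)"
    then obtain i j where "z = (diag op ^^ i) x \<star> (diag op ^^ j) y"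
      unfolding set_op_def diag_cycle_def by blast
    then have "z = (diag op ^^ i) (x \<star> y)"
      using assms by (simp add: op_funpow_diag_right funpow_diag_op funpow_diag_closed)
    then show "z \<in> diag_cycle op (x \<star> y)"
      unfolding diag_cycle_def by blast
  qed
  show "diag_cycle op (x \<star> y) \<subseteq> set_op op (diag_cycle op x) (diag_cycle op y)"
  proof
    fix z assume "z \<in> diag_cycle op (x \<star> y)"
    then obtain i where "z = (diag op ^^ i) x \<star> (diag op ^^ 0) y"
      unfolding diag_cycle_def using assms by (auto simp: funpow_diag_op)
    then show "z \<in> set_op op (diag_cycle op x) (diag_cycle op y)"
      unfolding set_op_def diag_cycle_def by blast
  qed
qed

lemma image_diag_cycle:
  assumes "\<And>y. y \<in> X \<Longrightarrow> f y \<in> X" "\<And>y. y \<in> X \<Longrightarrow> diag op (f y) = f (diag op y)" "x \<in> X"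
  shows "f ` diag_cycle op x = diag_cycle op (f x)"
proof -
  have "(diag op ^^ k) (f x) = f ((diag op ^^ k) x)" for k
    using assms by (induction k) (simp_all add: funpow_diag_closed)
  then have "diag_cycle op (f x) = {f ((diag op ^^ k) x) | k. True}"
    unfolding diag_cycle_def by presburger
  then show ?thesis
    unfolding diag_cycle_def by blast
qed

lemma ball_blocks: "(\<forall>A\<in>blocks X op. P A) \<longleftrightarrow> (\<forall>x\<in>X. P (diag_cycle op x))"
  by (simp add: blocks_def)

lemma diag_cycle_in_blocks: "x \<in> X \<Longrightarrow> diag_cycle op x \<in> blocks X op"
  by (simp add: blocks_def)

end

locale finite_gl_rack = gl_rack +
  assumes finite_carrier: "finite X"
begin

lemma diag_cycle_eq:
  assumes "x \<in> X" "y \<in> diag_cycle op x"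
  shows "diag_cycle op y = diag_cycle op x"
proof -
  obtain m where y: "y = (diag op ^^ m) x"
    using assms(2) unfolding diag_cycle_def by blast
  have "diag op ` X \<subseteq> X"
    using funpow_diag_closed[of _ 1] by auto
  then obtain n where "n > 0" "(diag op ^^ n) x = x"
    using funpow_inj_on_finite inj_on_diag finite_carrier assms(1) by metis
  then show ?thesis
    unfolding diag_cycle_def y by (rule funpow_orbit_eq)
qed

lemma diag_cycle_op_self: "x \<in> X \<Longrightarrow> diag_cycle op (x \<star> x) = diag_cycle op x"
  by (rule diag_cycle_eq) (auto simp: diag_cycle_def diag_def intro: exI[of _ 1])

lemma blk_proj_image_diag_cycle:
  assumes "x \<in> X"
  shows "blk_proj op ` diag_cycle op x = {diag_cycle op x}"
proof -
  have "x \<in> diag_cycle op x"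
    unfolding diag_cycle_def by (auto intro: exI[of _ 0])
  then show ?thesis
    using diag_cycle_eq[OF assms] unfolding blk_proj_def by blast
qed

lemma q_op_diag_cycle:
  "x \<in> X \<Longrightarrow> y \<in> X \<Longrightarrow> q_op op (diag_cycle op x) (diag_cycle op y) = diag_cycle op (x \<star> y)"
  by (simp add: q_op_def set_op_diag_cycle blk_proj_image_diag_cycle op_closed)

lemma q_map_diag_cycle:
  assumes "\<And>y. y \<in> X \<Longrightarrow> f y \<in> X" "\<And>y. y \<in> X \<Longrightarrow> diag op (f y) = f (diag op y)" "x \<in> X"
  shows "q_map op f (diag_cycle op x) = diag_cycle op (f x)"
  using assms by (simp add: q_map_def image_diag_cycle blk_proj_image_diag_cycle)

lemma q_map_u_diag_cycle: "x \<in> X \<Longrightarrow> q_map op u (diag_cycle op x) = diag_cycle op (u x)"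
  by (rule q_map_diag_cycle) (simp_all add: u_closed diag_u)

lemma q_map_d_diag_cycle: "x \<in> X \<Longrightarrow> q_map op d (diag_cycle op x) = diag_cycle op (d x)"
  by (rule q_map_diag_cycle) (simp_all add: d_closed diag_d)

lemma right_translation_blocks_surj:
  assumes "y \<in> X"
  shows "(\<lambda>A. q_op op A (diag_cycle op y)) ` blocks X op = blocks X op"
proof
  show "(\<lambda>A. q_op op A (diag_cycle op y)) ` blocks X op \<subseteq> blocks X op"
    using assms by (auto simp: blocks_def q_op_diag_cycle op_closed)
  show "blocks X op \<subseteq> (\<lambda>A. q_op op A (diag_cycle op y)) ` blocks X op"
  proof
    fix A assume "A \<in> blocks X op"
    then obtain z where "z \<in> X" "A = diag_cycle op z"
      by (auto simp: blocks_def)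
    moreover obtain w where "w \<in> X" "w \<star> y = z"
      using right_translation_surj \<open>z \<in> X\<close> assms by blast
    ultimately have "A = q_op op (diag_cycle op w) (diag_cycle op y)"
      using assms by (simp add: q_op_diag_cycle)
    then show "A \<in> (\<lambda>A. q_op op A (diag_cycle op y)) ` blocks X op"
      using diag_cycle_in_blocks[OF \<open>w \<in> X\<close>] by (rule image_eqI)
  qed
qed

lemma rack_blocks: "rack (blocks X op) (q_op op)"
  unfolding rack_def ball_blocks
proof (intro conjI ballI)
  fix x y z assume xyz: "x \<in> X" "y \<in> X" "z \<in> X"
  then show "q_op op (diag_cycle op x) (diag_cycle op y) \<in> blocks X op"
    by (simp add: q_op_diag_cycle diag_cycle_in_blocks op_closed)
  show "q_op op (q_op op (diag_cycle op x) (diag_cycle op y)) (diag_cycle op z) =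
        q_op op (q_op op (diag_cycle op x) (diag_cycle op z))
                (q_op op (diag_cycle op y) (diag_cycle op z))"
    using xyz self_distrib[OF xyz] by (simp add: q_op_diag_cycle op_closed)
next
  fix y assume "y \<in> X"
  then show "bij_betw (\<lambda>A. q_op op A (diag_cycle op y)) (blocks X op) (blocks X op)"
    using right_translation_blocks_surj finite_surj_inj[of "blocks X op"] finite_carrier
    by (simp add: bij_betw_def blocks_def)
qed

lemma GL_rack_blocks: "GL_rack (blocks X op) (q_op op) (q_map op u) (q_map op d)"
proof -
  note quotient_simps = q_op_diag_cycle q_map_u_diag_cycle q_map_d_diag_cycle
    op_closed u_closed d_closed
  have closed: "q_map op u (diag_cycle op x) \<in> blocks X op"
    "q_map op d (diag_cycle op x) \<in> blocks X op" if "x \<in> X" for x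
    using that by (simp_all add: quotient_simps diag_cycle_in_blocks)
  have inverse:
    "q_map op u (q_map op d (q_op op (diag_cycle op x) (diag_cycle op x))) = diag_cycle op x"
    "q_map op d (q_map op u (q_op op (diag_cycle op x) (diag_cycle op x))) = diag_cycle op x"
    if "x \<in> X" for x
    using that by (simp_all add: quotient_simps u_d_diag d_u_diag)
  have compatible:
    "q_map op u (q_op op (diag_cycle op x) (diag_cycle op y)) =
       q_op op (q_map op u (diag_cycle op x)) (diag_cycle op y)"
    "q_map op d (q_op op (diag_cycle op x) (diag_cycle op y)) =
       q_op op (q_map op d (diag_cycle op x)) (diag_cycle op y)"
    "q_op op (diag_cycle op x) (q_map op u (diag_cycle op y)) =
       q_op op (diag_cycle op x) (diag_cycle op y)"
    "q_op op (diag_cycle op x) (q_map op d (diag_cycle op y)) =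
       q_op op (diag_cycle op x) (diag_cycle op y)"
    if "x \<in> X" "y \<in> X" for x y
    using that by (simp_all add: quotient_simps u_op d_op op_u op_d)
  show ?thesis
    unfolding GL_rack_def ball_blocks
    using rack_blocks closed inverse compatible by simp
qed

lemma GL_quandle_blocks: "GL_quandle (blocks X op) (q_op op) (q_map op u) (q_map op d)"
  unfolding GL_quandle_def ball_blocks
  by (simp add: GL_rack_blocks q_op_diag_cycle diag_cycle_op_self)

end

theorem theorem3p5:
  fixes X :: "'a set" and op :: "'a \<Rightarrow> 'a \<Rightarrow> 'a" and u d :: "'a \<Rightarrow> 'a"
  assumes "block_GL_rack X op u d"
  shows "(\<forall>A\<in>blocks X op. \<forall>B\<in>blocks X op. set_op op A B \<in> blocks X op)
       \<and> (\<forall>A\<in>blocks X op. u ` A \<in> blocks X op)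
       \<and> (\<forall>A\<in>blocks X op. d ` A \<in> blocks X op)
       \<and> GL_quandle (blocks X op) (q_op op) (q_map op u) (q_map op d)"
proof -
  interpret finite_gl_rack X op u d
    using assms unfolding block_GL_rack_def by unfold_locales auto
  show ?thesis
    unfolding ball_blocks
    by (simp add: GL_quandle_blocks set_op_diag_cycle image_diag_cycle diag_cycle_in_blocks
        op_closed u_closed d_closed diag_u diag_d)
qed

end
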